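(* Let $P\in\mathbb{C}(\mathbf{x})$, $\mathbf{x}=(x_1,\dots,x_n)$, be a rational function that is homogeneous of degree $d$ (for some integer $d$), and let $S\subseteq\mathbb{R}^n$ be a significant set. If $P(\mathbf{x})=0$ for all $\mathbf{x}\in S$, then $P$ is the zero function.
   Context: A function $f$ is homogeneous of degree $d\in\mathbb{Z}$ if $f(\lambda\mathbf{x})=\lambda^d f(\mathbf{x})$ for all $\lambda\in\mathbb{R}\setminus\{0\}$ and all $\mathbf{x}$ in its domain. A subset $S\subseteq\mathbb{R}^n$ is significant if $x_1\neq0$ for all $\mathbf{x}\in S$ and the set $\hat S=\{(x_2/x_1,\dots,x_n/x_1):\mathbf{x}\in S\}$ contains a nonempty open subset of $\mathbb{R}^{n-1}$. The hypothesis includes that $P$ is defined on $S$. *)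

theory Defs
  imports "HOL-Analysis.Analysis"
begin

text \<open>Polynomials in the variables x_1,...,x_n over the complex numbers, represented by
  their coefficient function on exponent vectors.  Variable x_(i+1) has index i (i < n).\<close>

definition is_mpoly :: "nat \<Rightarrow> ((nat \<Rightarrow> nat) \<Rightarrow> complex) \<Rightarrow> bool" where
  "is_mpoly n c \<longleftrightarrow> finite {\<alpha>. c \<alpha> \<noteq> 0} \<and> (\<forall>\<alpha>. c \<alpha> \<noteq> 0 \<longrightarrow> (\<forall>i\<ge>n. \<alpha> i = 0))"

definition mpoly_eval :: "nat \<Rightarrow> ((nat \<Rightarrow> nat) \<Rightarrow> complex) \<Rightarrow> (nat \<Rightarrow> complex) \<Rightarrow> complex" where
  "mpoly_eval n c z = (\<Sum>\<alpha>\<in>{\<alpha>. c \<alpha> \<noteq> 0}. c \<alpha> * (\<Prod>i<n. z i ^ \<alpha> i))"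

definition cpoints :: "nat \<Rightarrow> (nat \<Rightarrow> complex) set" where
  "cpoints n = {z. \<forall>i\<ge>n. z i = 0}"

definition rpoints :: "nat \<Rightarrow> (nat \<Rightarrow> real) set" where
  "rpoints n = {x. \<forall>i\<ge>n. x i = 0}"

definition rat_eval :: "nat \<Rightarrow> ((nat \<Rightarrow> nat) \<Rightarrow> complex) \<Rightarrow> ((nat \<Rightarrow> nat) \<Rightarrow> complex)
    \<Rightarrow> (nat \<Rightarrow> complex) \<Rightarrow> complex" where
  "rat_eval n A B z = mpoly_eval n A z / mpoly_eval n B z"

definition rat_domain :: "nat \<Rightarrow> ((nat \<Rightarrow> nat) \<Rightarrow> complex) \<Rightarrow> (nat \<Rightarrow> complex) set" where
  "rat_domain n B = {z \<in> cpoints n. mpoly_eval n B z \<noteq> 0}"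

definition rat_homogeneous :: "nat \<Rightarrow> ((nat \<Rightarrow> nat) \<Rightarrow> complex) \<Rightarrow> ((nat \<Rightarrow> nat) \<Rightarrow> complex)
    \<Rightarrow> int \<Rightarrow> bool" where
  "rat_homogeneous n A B d \<longleftrightarrow>
     (\<forall>t::real. \<forall>z. t \<noteq> 0 \<longrightarrow> z \<in> rat_domain n B \<longrightarrow>
        (\<lambda>i. complex_of_real t * z i) \<in> rat_domain n B \<longrightarrow>
        rat_eval n A B (\<lambda>i. complex_of_real t * z i) = complex_of_real t powi d * rat_eval n A B z)"

text \<open>Significant sets.  S-hat lives in R^(n-1), represented as rpoints (n-1), carrying
  the (Euclidean) subspace topology of the product topology on nat => real.\<close>

definition hat_set :: "nat \<Rightarrow> (nat \<Rightarrow> real) set \<Rightarrow> (nat \<Rightarrow> real) set" where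
  "hat_set n S = (\<lambda>x. (\<lambda>i. if i < n - 1 then x (Suc i) / x 0 else 0)) ` S"

definition significant :: "nat \<Rightarrow> (nat \<Rightarrow> real) set \<Rightarrow> bool" where
  "significant n S \<longleftrightarrow> S \<subseteq> rpoints n \<and> (\<forall>x\<in>S. x 0 \<noteq> 0) \<and>
     (\<exists>U. openin (top_of_set (rpoints (n - 1))) U \<and> U \<noteq> {} \<and> U \<subseteq> hat_set n S)"

end

(* By homogeneity the numerator A vanishes on the whole complex line through every point x of S:
   for real t <> 0 we have A(t x) = t^d A(x) B(t x) / B(x) = 0 whenever B(t x) <> 0, which excludes
   only finitely many t, and A(w x) is a polynomial in w.  Significance makes the union of these
   lines contain a cone {z. z_0 <> 0, z_(i+1) / z_0 in X_i} over a product of nonempty open real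
   sets.  Such a cone is a box whose i-th fibre, z_0 X_(i-1), depends on z_0 but is always infinite,
   and a polynomial vanishing on such a box is zero, by induction on the number of variables using
   that a univariate polynomial with infinitely many roots is zero. *)

theory Submission
  imports Defs "HOL-Computational_Algebra.Polynomial"
begin

lemma poly_eq_0_if_infinite_roots:
  fixes p :: "'a::idom poly"
  assumes "infinite W" and "\<And>w. w \<in> W \<Longrightarrow> poly p w = 0"
  shows "p = 0"
  using assms poly_roots_finite[of p] finite_subset[of W "{w. poly p w = 0}"] by blast

lemma sum_powers_eq_0_imp_coeff_eq_0:
  fixes a :: "nat \<Rightarrow> 'a::idom"
  assumes "finite K" and "infinite W" and "\<And>w. w \<in> W \<Longrightarrow> (\<Sum>k\<in>K. a k * w ^ k) = 0"
    and "j \<in> K"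
  shows "a j = 0"
proof -
  define p where "p = (\<Sum>k\<in>K. monom (a k) k)"
  have "poly p w = (\<Sum>k\<in>K. a k * w ^ k)" for w
    by (simp add: p_def poly_sum poly_monom)
  with assms(2,3) have "p = 0" by (metis poly_eq_0_if_infinite_roots)
  moreover have "coeff p j = a j"
    using assms(1,4) by (simp add: p_def coeff_sum)
  ultimately show ?thesis by simp
qed

lemma sum_monomials_group_by_exponent:
  fixes c :: "(nat \<Rightarrow> nat) \<Rightarrow> 'a::comm_semiring_1"
  assumes "finite F"
  shows "(\<Sum>\<alpha>\<in>F. c \<alpha> * (\<Prod>i<m. z i ^ \<alpha> i) * w ^ \<alpha> m)
       = (\<Sum>k\<in>(\<lambda>\<alpha>. \<alpha> m) ` F. (\<Sum>\<alpha>\<in>{\<alpha>\<in>F. \<alpha> m = k}. c \<alpha> * (\<Prod>i<m. z i ^ \<alpha> i)) * w ^ k)"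
proof -
  have "(\<Sum>\<alpha>\<in>F. c \<alpha> * (\<Prod>i<m. z i ^ \<alpha> i) * w ^ \<alpha> m)
      = (\<Sum>k\<in>(\<lambda>\<alpha>. \<alpha> m) ` F. \<Sum>\<alpha>\<in>{\<alpha>\<in>F. \<alpha> m = k}. c \<alpha> * (\<Prod>i<m. z i ^ \<alpha> i) * w ^ \<alpha> m)"
    using assms by (intro sum.group[symmetric]) auto
  also have "\<dots> = (\<Sum>k\<in>(\<lambda>\<alpha>. \<alpha> m) ` F. (\<Sum>\<alpha>\<in>{\<alpha>\<in>F. \<alpha> m = k}. c \<alpha> * (\<Prod>i<m. z i ^ \<alpha> i)) * w ^ k)"
    by (auto simp: sum_distrib_right intro!: sum.cong)
  finally show ?thesis .
qed

text \<open>The fibred box is \<open>{z. \<forall>i<m. z i \<in> T i z}\<close>, where the fibre \<open>T i z\<close> depends only on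
  \<open>z 0, \<dots>, z (i - 1)\<close>.  Grouping by the exponent of the last variable, each of its coefficients
  vanishes on the box of one dimension less.\<close>

lemma sum_coeffs_eq_0_if_vanishes_on_fibred_box:
  fixes F :: "(nat \<Rightarrow> nat) set" and c :: "(nat \<Rightarrow> nat) \<Rightarrow> 'a::idom"
    and T :: "nat \<Rightarrow> (nat \<Rightarrow> 'a) \<Rightarrow> 'a set"
  assumes "finite F"
    and T_infinite: "\<And>i z. \<forall>j<i. z j \<in> T j z \<Longrightarrow> infinite (T i z)"
    and T_prefix: "\<And>i z z'. \<forall>j<i. z j = z' j \<Longrightarrow> T i z = T i z'"
    and vanish: "\<And>z. \<forall>i<m. z i \<in> T i z \<Longrightarrow> (\<Sum>\<alpha>\<in>F. c \<alpha> * (\<Prod>i<m. z i ^ \<alpha> i)) = 0"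
  shows "(\<Sum>\<alpha>\<in>{\<alpha>\<in>F. \<forall>i<m. \<alpha> i = \<beta> i}. c \<alpha>) = 0"
  using assms(1) vanish
proof (induction m arbitrary: F \<beta>)
  case 0
  then show ?case by simp
next
  case (Suc m)
  define F\<^sub>k where "F\<^sub>k k = {\<alpha>\<in>F. \<alpha> m = k}" for k
  have coeff_vanish: "(\<Sum>\<alpha>\<in>F\<^sub>k k. c \<alpha> * (\<Prod>i<m. z i ^ \<alpha> i)) = 0"
    if z: "\<forall>i<m. z i \<in> T i z" and k: "k \<in> (\<lambda>\<alpha>. \<alpha> m) ` F" for z k
  proof (rule sum_powers_eq_0_imp_coeff_eq_0[OF _ T_infinite[OF z] _ k])
    show "finite ((\<lambda>\<alpha>. \<alpha> m) ` F)" using Suc.prems(1) by simp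
  next
    fix w assume w: "w \<in> T m z"
    have z_upd: "\<forall>i<Suc m. (z(m := w)) i \<in> T i (z(m := w))"
      using z w T_prefix[of _ "z(m := w)" z] by (auto simp: less_Suc_eq)
    have "(\<Sum>\<alpha>\<in>F. c \<alpha> * (\<Prod>i<m. z i ^ \<alpha> i) * w ^ \<alpha> m)
        = (\<Sum>\<alpha>\<in>F. c \<alpha> * (\<Prod>i<Suc m. (z(m := w)) i ^ \<alpha> i))"
      by (intro sum.cong) (simp_all add: mult.assoc)
    also have "\<dots> = 0" using z_upd by (rule Suc.prems(2))
    finally show "(\<Sum>k\<in>(\<lambda>\<alpha>. \<alpha> m) ` F. (\<Sum>\<alpha>\<in>F\<^sub>k k. c \<alpha> * (\<Prod>i<m. z i ^ \<alpha> i)) * w ^ k) = 0"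
      by (simp only: F\<^sub>k_def sum_monomials_group_by_exponent[OF Suc.prems(1)])
  qed
  show ?case
  proof (cases "\<beta> m \<in> (\<lambda>\<alpha>. \<alpha> m) ` F")
    case True
    have "(\<Sum>\<alpha>\<in>{\<alpha>\<in>F\<^sub>k (\<beta> m). \<forall>i<m. \<alpha> i = \<beta> i}. c \<alpha>) = 0"
      using Suc.IH[of "F\<^sub>k (\<beta> m)"] Suc.prems(1) coeff_vanish True by (simp add: F\<^sub>k_def)
    moreover have "{\<alpha>\<in>F\<^sub>k (\<beta> m). \<forall>i<m. \<alpha> i = \<beta> i} = {\<alpha>\<in>F. \<forall>i<Suc m. \<alpha> i = \<beta> i}"
      by (auto simp: F\<^sub>k_def less_Suc_eq)
    ultimately show ?thesis by simp
  next
    case False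
    have "{\<alpha>\<in>F. \<forall>i<Suc m. \<alpha> i = \<beta> i} = {}"
    proof (rule equals0I)
      fix \<alpha> assume "\<alpha> \<in> {\<alpha>\<in>F. \<forall>i<Suc m. \<alpha> i = \<beta> i}"
      then have "\<alpha> \<in> F" "\<alpha> m = \<beta> m" using lessI by auto
      with False show False by (metis image_eqI)
    qed
    then show ?thesis by (simp only: sum.empty)
  qed
qed

lemma mpoly_eq_0_if_vanishes_on_fibred_box:
  fixes T :: "nat \<Rightarrow> (nat \<Rightarrow> complex) \<Rightarrow> complex set"
  assumes c: "is_mpoly n c"
    and "\<And>i z. \<forall>j<i. z j \<in> T j z \<Longrightarrow> infinite (T i z)"
    and "\<And>i z z'. \<forall>j<i. z j = z' j \<Longrightarrow> T i z = T i z'"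
    and "\<And>z. \<forall>i<n. z i \<in> T i z \<Longrightarrow> mpoly_eval n c z = 0"
  shows "c = (\<lambda>_. 0)"
proof
  fix \<beta>
  define F where "F = {\<alpha>. c \<alpha> \<noteq> 0}"
  have "finite F" using c by (simp add: is_mpoly_def F_def)
  then have sum_eq_0: "(\<Sum>\<alpha>\<in>{\<alpha>\<in>F. \<forall>i<n. \<alpha> i = \<beta> i}. c \<alpha>) = 0"
    using assms(2-4) unfolding mpoly_eval_def F_def
    by (rule sum_coeffs_eq_0_if_vanishes_on_fibred_box)
  show "c \<beta> = 0"
  proof (rule ccontr)
    assume \<beta>: "c \<beta> \<noteq> 0"
    have "\<alpha> = \<beta>" if "c \<alpha> \<noteq> 0" "\<forall>i<n. \<alpha> i = \<beta> i" for \<alpha>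
    proof
      fix i
      have "\<forall>i\<ge>n. \<alpha> i = 0" "\<forall>i\<ge>n. \<beta> i = 0" using that(1) \<beta> c by (auto simp: is_mpoly_def)
      then show "\<alpha> i = \<beta> i" using that(2) by (cases "i < n") auto
    qed
    with \<beta> have "{\<alpha>\<in>F. \<forall>i<n. \<alpha> i = \<beta> i} = {\<beta>}" by (auto simp: F_def)
    with sum_eq_0 \<beta> show False by simp
  qed
qed

lemma mpoly_eq_0_if_vanishes_on_cone:
  fixes X :: "nat \<Rightarrow> real set"
  assumes "n \<ge> 1" and c: "is_mpoly n c" and X_open: "\<And>i. open (X i)" and X_ne: "\<And>i. X i \<noteq> {}"
    and vanish: "\<And>z. z 0 \<noteq> 0 \<Longrightarrow> (\<And>i. i < n - 1 \<Longrightarrow> \<exists>r\<in>X i. z (Suc i) = z 0 * complex_of_real r)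
      \<Longrightarrow> mpoly_eval n c z = 0"
  shows "c = (\<lambda>_. 0)"
proof -
  define T :: "nat \<Rightarrow> (nat \<Rightarrow> complex) \<Rightarrow> complex set"
    where "T i z = (if i = 0 then - {0} else (\<lambda>r. z 0 * complex_of_real r) ` X (i - 1))" for i z
  have "infinite (T i z)" if "\<forall>j<i. z j \<in> T j z" for i z
  proof (cases "i = 0")
    case False
    with that have "z 0 \<noteq> 0" by (auto simp: T_def)
    moreover have "infinite (X (i - 1))" using X_open X_ne finite_imp_not_open by blast
    ultimately have "infinite ((\<lambda>r. z 0 * complex_of_real r) ` X (i - 1))"
      using finite_imageD[of "\<lambda>r. z 0 * complex_of_real r" "X (i - 1)"] by (auto simp: inj_on_def)
    with False show ?thesis by (simp add: T_def)
  qed (simp add: T_def infinite_UNIV_char_0)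
  moreover have "T i z = T i z'" if "\<forall>j<i. z j = z' j" for i z z'
    using that by (simp add: T_def)
  moreover have "mpoly_eval n c z = 0" if z: "\<forall>i<n. z i \<in> T i z" for z
  proof (rule vanish)
    show "z 0 \<noteq> 0" using z[rule_format, of 0] \<open>n \<ge> 1\<close> by (simp add: T_def)
    show "\<exists>r\<in>X i. z (Suc i) = z 0 * complex_of_real r" if "i < n - 1" for i
      using z[rule_format, of "Suc i"] that by (auto simp: T_def image_iff less_diff_conv)
  qed
  ultimately show ?thesis by (rule mpoly_eq_0_if_vanishes_on_fibred_box[OF c])
qed

lemma mpoly_eval_cong:
  assumes "\<And>i. i < n \<Longrightarrow> z i = z' i"
  shows "mpoly_eval n c z = mpoly_eval n c z'"
  unfolding mpoly_eval_def using assms by (intro sum.cong prod.cong) auto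

lemma mpoly_eval_on_line_is_poly:
  obtains p where "\<And>w. poly p w = mpoly_eval n c (\<lambda>i. w * x i)"
proof
  fix w
  show "poly (\<Sum>\<alpha>\<in>{\<alpha>. c \<alpha> \<noteq> 0}. monom (c \<alpha> * (\<Prod>i<n. x i ^ \<alpha> i)) (\<Sum>i<n. \<alpha> i)) w
      = mpoly_eval n c (\<lambda>i. w * x i)"
    by (auto simp: poly_sum poly_monom mpoly_eval_def power_mult_distrib prod.distrib
        power_sum mult_ac intro!: sum.cong)
qed

lemma numerator_vanishes_on_line:
  assumes hom: "rat_homogeneous n A B d"
    and x: "x \<in> rat_domain n B" and zero: "rat_eval n A B x = 0"
  shows "mpoly_eval n A (\<lambda>i. s * x i) = 0"
proof -
  obtain p\<^sub>A where p\<^sub>A: "\<And>w. poly p\<^sub>A w = mpoly_eval n A (\<lambda>i. w * x i)"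
    using mpoly_eval_on_line_is_poly[of n A x] by blast
  obtain p\<^sub>B where p\<^sub>B: "\<And>w. poly p\<^sub>B w = mpoly_eval n B (\<lambda>i. w * x i)"
    using mpoly_eval_on_line_is_poly[of n B x] by blast
  have "poly p\<^sub>B 1 \<noteq> 0" using x by (simp add: p\<^sub>B rat_domain_def)
  then have "finite {w. poly p\<^sub>B w = 0}" by (intro poly_roots_finite) auto
  moreover have "infinite (complex_of_real ` (- {0}))"
    by (auto simp: inj_on_def infinite_UNIV_char_0 dest!: finite_imageD)
  ultimately have W: "infinite (complex_of_real ` (- {0}) - {w. poly p\<^sub>B w = 0})" by simp
  have "poly p\<^sub>A w = 0" if "w \<in> complex_of_real ` (- {0}) - {w. poly p\<^sub>B w = 0}" for w
  proof -
    from that obtain t :: real where t: "t \<noteq> 0" "w = complex_of_real t" by blast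
    from that have "poly p\<^sub>B w \<noteq> 0" by simp
    have tx: "(\<lambda>i. complex_of_real t * x i) \<in> rat_domain n B"
      using x t \<open>poly p\<^sub>B w \<noteq> 0\<close> p\<^sub>B[of w] by (auto simp: rat_domain_def cpoints_def)
    have "rat_eval n A B (\<lambda>i. complex_of_real t * x i) = complex_of_real t powi d * rat_eval n A B x"
      using hom t(1) x tx by (simp add: rat_homogeneous_def)
    with zero have "rat_eval n A B (\<lambda>i. complex_of_real t * x i) = 0" by simp
    with tx show ?thesis by (simp add: p\<^sub>A t(2) rat_eval_def rat_domain_def)
  qed
  with W have "p\<^sub>A = 0" by (rule poly_eq_0_if_infinite_roots)
  then show ?thesis using p\<^sub>A[of s] by simp
qed

lemma open_fun_contains_box:
  fixes V :: "('a \<Rightarrow> 'b::topological_space) set"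
  assumes "open V" and "y \<in> V"
  obtains X where "\<And>i. open (X i)" "\<And>i. y i \<in> X i" "Pi\<^sub>E UNIV X \<subseteq> V"
proof -
  have "openin (product_topology (\<lambda>i. euclidean) UNIV) V" using assms(1) by (simp add: open_fun_def)
  from product_topology_open_contains_basis[OF this assms(2)] that show ?thesis by auto
qed

lemma significant_contains_box:
  assumes "significant n S"
  obtains X :: "nat \<Rightarrow> real set" where "\<And>i. open (X i)" "\<And>i. X i \<noteq> {}"
    "\<And>y. y \<in> rpoints (n - 1) \<Longrightarrow> \<forall>i<n - 1. y i \<in> X i \<Longrightarrow> y \<in> hat_set n S"
proof -
  obtain U where U: "openin (top_of_set (rpoints (n - 1))) U" "U \<noteq> {}" "U \<subseteq> hat_set n S"
    using assms unfolding significant_def by blast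
  obtain V where V: "open V" "U = V \<inter> rpoints (n - 1)"
    using U(1) by (metis openin_open Int_commute)
  obtain y\<^sub>0 where y\<^sub>0: "y\<^sub>0 \<in> U" using U(2) by auto
  obtain X where X: "\<And>i. open (X i)" "\<And>i. y\<^sub>0 i \<in> X i" "Pi\<^sub>E UNIV X \<subseteq> V"
    using open_fun_contains_box[OF V(1), of y\<^sub>0] y\<^sub>0 V(2) by blast
  show ?thesis
  proof (rule that[OF X(1)])
    show "X i \<noteq> {}" for i using X(2) by blast
  next
    fix y assume y: "y \<in> rpoints (n - 1)" "\<forall>i<n - 1. y i \<in> X i"
    \<comment> \<open>beyond \<open>n - 1\<close> both \<open>y\<close> and \<open>y\<^sub>0\<close> vanish\<close>
    have "y i \<in> X i" for i
      using y y\<^sub>0 V(2) X(2)[of i] by (cases "i < n - 1") (auto simp: rpoints_def)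
    then show "y \<in> hat_set n S" using X(3) V(2) U(3) y(1) by auto
  qed
qed

lemma numerator_vanishes_on_cone:
  assumes hom: "rat_homogeneous n A B d" and S: "significant n S"
    and dom: "\<forall>x\<in>S. (\<lambda>i. complex_of_real (x i)) \<in> rat_domain n B"
    and zero: "\<forall>x\<in>S. rat_eval n A B (\<lambda>i. complex_of_real (x i)) = 0"
    and y: "y \<in> hat_set n S"
    and z: "\<And>i. i < n - 1 \<Longrightarrow> z (Suc i) = z 0 * complex_of_real (y i)"
  shows "mpoly_eval n A z = 0"
proof -
  obtain x where x: "x \<in> S" and y_def: "y = (\<lambda>i. if i < n - 1 then x (Suc i) / x 0 else 0)"
    using y by (auto simp: hat_set_def)
  have x0: "x 0 \<noteq> 0" using S x by (simp add: significant_def)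
  have "z i = z 0 / complex_of_real (x 0) * complex_of_real (x i)" if "i < n" for i
  proof (cases i)
    case (Suc j)
    with that z[of j] x0 show ?thesis by (simp add: y_def)
  qed (use x0 in simp)
  then have "mpoly_eval n A z
      = mpoly_eval n A (\<lambda>i. z 0 / complex_of_real (x 0) * complex_of_real (x i))"
    by (rule mpoly_eval_cong)
  also have "\<dots> = 0"
    using x dom zero by (intro numerator_vanishes_on_line[OF hom]) auto
  finally show ?thesis .
qed

theorem lemma2:
  fixes n :: nat and d :: int
    and A B :: "(nat \<Rightarrow> nat) \<Rightarrow> complex"
    and S :: "(nat \<Rightarrow> real) set"
  assumes "n \<ge> 1"
    and "is_mpoly n A" and "is_mpoly n B" and "B \<noteq> (\<lambda>_. 0)"
    and "rat_homogeneous n A B d"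
    and "significant n S"
    and "\<forall>x\<in>S. (\<lambda>i. complex_of_real (x i)) \<in> rat_domain n B"
    and "\<forall>x\<in>S. rat_eval n A B (\<lambda>i. complex_of_real (x i)) = 0"
  shows "\<forall>z\<in>rat_domain n B. rat_eval n A B z = 0"
proof -
  obtain X where X_open: "\<And>i. open (X i)" and X_ne: "\<And>i. X i \<noteq> {}"
    and X_hat: "\<And>y. y \<in> rpoints (n - 1) \<Longrightarrow> \<forall>i<n - 1. y i \<in> X i \<Longrightarrow> y \<in> hat_set n S"
    using significant_contains_box[OF assms(6)] by blast
  have "mpoly_eval n A z = 0"
    if z: "\<And>i. i < n - 1 \<Longrightarrow> \<exists>r\<in>X i. z (Suc i) = z 0 * complex_of_real r" for z
  proof -
    obtain r where r: "\<And>i. i < n - 1 \<Longrightarrow> r i \<in> X i \<and> z (Suc i) = z 0 * complex_of_real (r i)"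
      using z by metis
    define y where "y i = (if i < n - 1 then r i else 0)" for i
    have "y \<in> hat_set n S" using X_hat r by (simp add: y_def rpoints_def)
    with r show ?thesis
      by (intro numerator_vanishes_on_cone[OF assms(5-8)]) (auto simp: y_def)
  qed
  then have "A = (\<lambda>_. 0)"
    using mpoly_eq_0_if_vanishes_on_cone[of n A X] assms(1,2) X_open X_ne by blast
  then show ?thesis by (simp add: rat_eval_def mpoly_eval_def)
qed

end
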